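(* Let $P$ be a finite self-dual poset admitting an order-reversing involution $\kappa:P\to P$, and let $\ell\in P$. For $I\in\mathcal J(P)$ let $I'$ be the order ideal generated by $\kappa(\max(I))$. Consider the group of permutations of $\mathcal J(P)$ generated by rowmotion $\rho$ and the map $I\mapsto I'$, and call its orbits dihedral group orbits. Then $\chi_\ell-\chi_{\kappa(\ell)}$ is $0$-mesic on dihedral group orbits, i.e. its average over every dihedral group orbit is $0$.
   Context: $\mathcal J(P)$ is the set of order ideals of $P$; rowmotion $\rho$ sends $I$ to the order ideal generated by $\min(P\setminus I)$. For $q\in P$, $\chi_q(I)=1$ if $q\in\max(I)$, else $0$. *)

theory Defs
  imports Complex_Main
begin

text \<open>The finite poset P is the (finite) type 'a with its partial order.\<close>

definition order_ideals :: "('a::order) set set" where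
  "order_ideals = {I. \<forall>x y. y \<le> x \<longrightarrow> x \<in> I \<longrightarrow> y \<in> I}"

definition max_elts :: "('a::order) set \<Rightarrow> 'a set" where
  "max_elts S = {x \<in> S. \<forall>y\<in>S. x \<le> y \<longrightarrow> y = x}"

definition min_elts :: "('a::order) set \<Rightarrow> 'a set" where
  "min_elts S = {x \<in> S. \<forall>y\<in>S. y \<le> x \<longrightarrow> y = x}"

definition ideal_gen :: "('a::order) set \<Rightarrow> 'a set" where
  "ideal_gen S = {x. \<exists>m\<in>S. x \<le> m}"

definition rowmotion :: "('a::order) set \<Rightarrow> 'a set" where
  "rowmotion I = ideal_gen (min_elts (UNIV - I))"

definition kflip :: "('a::order \<Rightarrow> 'a) \<Rightarrow> 'a set \<Rightarrow> 'a set" where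
  "kflip \<kappa> I = ideal_gen (\<kappa> ` max_elts I)"

definition chi :: "('a::order) \<Rightarrow> 'a set \<Rightarrow> real" where
  "chi q I = (if q \<in> max_elts I then 1 else 0)"

definition dstep :: "('a::order \<Rightarrow> 'a) \<Rightarrow> 'a set \<Rightarrow> 'a set \<Rightarrow> bool" where
  "dstep \<kappa> J K \<longleftrightarrow> J \<in> order_ideals \<and> (K = rowmotion J \<or> K = kflip \<kappa> J)"

text \<open>Orbit of I under the group generated by the two permutations: the equivalence
  class of I w.r.t. the equivalence relation generated by the steps.\<close>
definition dihedral_orbit :: "('a::order \<Rightarrow> 'a) \<Rightarrow> 'a set \<Rightarrow> 'a set set" where
  "dihedral_orbit \<kappa> I = {K. (sup (dstep \<kappa>) (dstep \<kappa>)\<inverse>\<inverse>)\<^sup>*\<^sup>* I K}"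

end

theory Submission
  imports Defs
begin

text \<open>Since \<open>\<kappa>\<close> is an order-reversing involution, it maps the antichain \<open>max(I)\<close> to an
  antichain, which is then exactly the set of maximal elements of \<open>I'\<close>. As an ideal of a finite
  poset is generated by its maximal elements, \<open>I \<mapsto> I'\<close> is an involution; it preserves every
  dihedral orbit and turns \<open>chi (\<kappa> \<ell>)\<close> into \<open>chi \<ell>\<close>. Reindexing the sum of \<open>chi (\<kappa> \<ell>)\<close> over
  an orbit along this involution gives the sum of \<open>chi \<ell>\<close>.\<close>

lemma ideal_gen_in_order_ideals: "ideal_gen S \<in> order_ideals"
  unfolding ideal_gen_def order_ideals_def by (auto intro: order_trans)

lemma max_elts_ideal_gen_antichain:
  assumes "\<And>x y. x \<in> S \<Longrightarrow> y \<in> S \<Longrightarrow> x \<le> y \<Longrightarrow> x = y"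
  shows "max_elts (ideal_gen S) = S"
  unfolding max_elts_def ideal_gen_def
  using assms by (auto intro: order_trans antisym)

lemma ideal_gen_max_elts:
  fixes I :: "'a::order set"
  assumes "I \<in> order_ideals" and "finite I"
  shows "ideal_gen (max_elts I) = I"
proof
  show "ideal_gen (max_elts I) \<subseteq> I"
    using assms(1) unfolding ideal_gen_def max_elts_def order_ideals_def by blast
  show "I \<subseteq> ideal_gen (max_elts I)"
  proof
    fix x assume "x \<in> I"
    then obtain m where "m \<in> I" "x \<le> m" "\<forall>y\<in>I. m \<le> y \<longrightarrow> m = y"
      using finite_has_maximal2[OF assms(2)] by blast
    then show "x \<in> ideal_gen (max_elts I)"
      unfolding ideal_gen_def max_elts_def by auto
  qed
qed

context
  fixes \<kappa> :: "'a::order \<Rightarrow> 'a"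
  assumes invol: "\<And>x. \<kappa> (\<kappa> x) = x"
    and antimono: "\<And>x y. x \<le> y \<Longrightarrow> \<kappa> y \<le> \<kappa> x"
begin

lemma max_elts_kflip: "max_elts (kflip \<kappa> I) = \<kappa> ` max_elts I"
  unfolding kflip_def
proof (rule max_elts_ideal_gen_antichain)
  fix x y assume "x \<in> \<kappa> ` max_elts I" "y \<in> \<kappa> ` max_elts I" "x \<le> y"
  then obtain a b where ab: "a \<in> max_elts I" "b \<in> max_elts I" "x = \<kappa> a" "y = \<kappa> b"
    by blast
  have "b \<le> a" using antimono[OF \<open>x \<le> y\<close>] ab invol by simp
  then have "a = b" using ab unfolding max_elts_def by blast
  then show "x = y" using ab by simp
qed

lemma kflip_kflip:
  assumes "I \<in> order_ideals" and "finite I"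
  shows "kflip \<kappa> (kflip \<kappa> I) = I"
proof -
  have "kflip \<kappa> (kflip \<kappa> I) = ideal_gen (\<kappa> ` \<kappa> ` max_elts I)"
    unfolding kflip_def[of \<kappa> "kflip \<kappa> I"] max_elts_kflip ..
  also have "\<kappa> ` \<kappa> ` max_elts I = max_elts I"
    using invol by (simp add: image_image)
  finally show ?thesis
    using ideal_gen_max_elts[OF assms] by simp
qed

lemma chi_kflip: "chi (\<kappa> l) (kflip \<kappa> K) = chi l K"
proof -
  have "\<kappa> l \<in> \<kappa> ` max_elts K \<longleftrightarrow> l \<in> max_elts K"
    by (metis image_eqI imageE invol)
  then show ?thesis
    unfolding chi_def max_elts_kflip by simp
qed

end

lemma dihedral_orbit_order_ideals:
  assumes "K \<in> dihedral_orbit \<kappa> I" and "I \<in> order_ideals"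
  shows "K \<in> order_ideals"
proof -
  have "(sup (dstep \<kappa>) (dstep \<kappa>)\<inverse>\<inverse>)\<^sup>*\<^sup>* I K"
    using assms(1) unfolding dihedral_orbit_def by simp
  then show ?thesis
    using assms(2)
    by (induction rule: rtranclp_induct)
       (auto simp: dstep_def rowmotion_def kflip_def ideal_gen_in_order_ideals)
qed

lemma kflip_in_dihedral_orbit:
  assumes "K \<in> dihedral_orbit \<kappa> I" and "I \<in> order_ideals"
  shows "kflip \<kappa> K \<in> dihedral_orbit \<kappa> I"
proof -
  have "dstep \<kappa> K (kflip \<kappa> K)"
    using dihedral_orbit_order_ideals[OF assms] by (simp add: dstep_def)
  then show ?thesis
    using assms(1) unfolding dihedral_orbit_def
    by (auto intro: rtranclp.rtrancl_into_rtrancl)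
qed

theorem theorem5p15:
  fixes \<kappa> :: "'a::{order,finite} \<Rightarrow> 'a" and l :: 'a
  assumes invol: "\<And>x. \<kappa> (\<kappa> x) = x"
    and rev: "\<And>x y. x \<le> y \<Longrightarrow> \<kappa> y \<le> \<kappa> x"
    and I: "I \<in> order_ideals"
  shows "(\<Sum>K\<in>dihedral_orbit \<kappa> I. chi l K - chi (\<kappa> l) K)
           / real (card (dihedral_orbit \<kappa> I)) = 0"
proof -
  let ?O = "dihedral_orbit \<kappa> I"
  have kflip_invol: "kflip \<kappa> (kflip \<kappa> K) = K" if "K \<in> ?O" for K
    using kflip_kflip[OF invol rev dihedral_orbit_order_ideals[OF that I]] by simp
  have "(\<Sum>K\<in>?O. chi l K) = (\<Sum>K\<in>?O. chi (\<kappa> l) K)"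
    by (rule sum.reindex_bij_witness[where i = "kflip \<kappa>" and j = "kflip \<kappa>"])
       (simp_all add: kflip_invol kflip_in_dihedral_orbit[OF _ I] chi_kflip[OF invol rev])
  then show ?thesis
    by (simp add: sum_subtractf)
qed

end
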